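(* Let $q \ge 2$ and $n$ be integers, let $k$ be an integer with $k \le \lfloor n/2\rfloor - 1$, and let $p_{k+1}, p_{k+2}, \dots, p_n$ be real numbers such that $p_i \ge 0$ for all $i \in [k+1, n-(k+1)]$. If $$\sum_{i=j}^{n} p_i \binom{n-j}{i-j} \le 0 \quad \text{for all } j \in [k+1, n],$$ and $$\sum_{i=\lfloor n/2\rfloor+1}^{n} p_i \left(q^{2i-n}-1\right)\binom{n}{i} > 0,$$ then $k$-uniform states in $(\mathbb{C}^q)^{\otimes n}$ do not exist.
   Context: For integers $a \le b$, $[a,b]$ denotes $\{a, a+1, \dots, b\}$. A pure state $|\psi\rangle \in (\mathbb{C}^q)^{\otimes n}$ is called $k$-uniform if, with $\rho = |\psi\rangle\langle\psi|$, for every subset $S \subseteq \{1,\dots,n\}$ with $|S| = k$ the reduced state of $\rho$ on the parties in $S$ equals $I/q^k$, where $I$ is the identity on $(\mathbb{C}^q)^{\otimes k}$. *)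

theory Defs
  imports Complex_Main "HOL-Library.FuncSet"
begin

text \<open>Computational basis of (C^q)^{\<otimes>n}: configurations x : {0..<n} \<rightarrow> {0..<q}.
  A vector psi in (C^q)^{\<otimes>n} is given by its coordinates psi x on these configurations.\<close>

definition configs :: "nat set \<Rightarrow> nat \<Rightarrow> (nat \<Rightarrow> nat) set" where
  "configs S q = PiE S (\<lambda>_. {0..<q})"

definition merge_cfg :: "nat set \<Rightarrow> (nat \<Rightarrow> nat) \<Rightarrow> (nat \<Rightarrow> nat) \<Rightarrow> (nat \<Rightarrow> nat)" where
  "merge_cfg S a c = (\<lambda>i. if i \<in> S then a i else c i)"

text \<open>Matrix entry (a,b) of the reduced state Tr_{S^c} |psi><psi| on the parties S,
  in the computational basis.\<close>
definition reduced_state ::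
  "nat \<Rightarrow> nat \<Rightarrow> ((nat \<Rightarrow> nat) \<Rightarrow> complex) \<Rightarrow> nat set \<Rightarrow> (nat \<Rightarrow> nat) \<Rightarrow> (nat \<Rightarrow> nat) \<Rightarrow> complex" where
  "reduced_state n q psi S a b =
     (\<Sum>c\<in>configs ({0..<n} - S) q. psi (merge_cfg S a c) * cnj (psi (merge_cfg S b c)))"

definition k_uniform :: "nat \<Rightarrow> nat \<Rightarrow> nat \<Rightarrow> ((nat \<Rightarrow> nat) \<Rightarrow> complex) \<Rightarrow> bool" where
  "k_uniform n q k psi \<longleftrightarrow>
     (\<forall>S. S \<subseteq> {0..<n} \<and> card S = k \<longrightarrow>
        (\<forall>a\<in>configs S q. \<forall>b\<in>configs S q.
           reduced_state n q psi S a b = (if a = b then 1 / of_nat (q ^ k) else 0)))"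

end

theory Submission
  imports Defs
begin

text \<open>Rains' shadow argument. For an operator r on the n parties let
  \<pi>(S) = q^|S| tr(r_S^2) be the scaled purity of its reduction r_S to the parties in S, and let
  Q(T) = \<Sum>{(-1)^(|T|-|S|) \<pi>(S) | S \<subseteq> T} be its Moebius transform. Q is nonnegative: split off
  one site of T and apply a variance identity to the blocks of r at that site. For a k-uniform
  state, Q({}) = 1 and Q(T) = 0 for 1 \<le> |T| \<le> k, hence
    \<Sum>{p(|U|) \<pi>(U) | U} = \<Sum>{Q(T) \<Sum>{p(|U|) | U \<supseteq> T} | T} \<le> \<Sum>{p(|U|) | U}
  by the hypothesis on the binomial sums. On the other hand \<pi>(U) \<ge> 1; the two halves of a pure
  state have the same purity, so \<pi>(U) = q^(2|U|-n) \<pi>({0..<n} - U); and \<pi>(U) is known exactly when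
  |U| \<le> k or |U| \<ge> n - k. With the sign condition on p this gives
    \<Sum>{p(|U|) (\<pi>(U) - 1) | U} \<ge> \<Sum>{p(i) (q^(2i-n) - 1) C(n,i) | n/2 < i \<le> n} > 0,
  a contradiction.\<close>

lemma sum_Pow_moebius_inversion:
  fixes f :: "'a set \<Rightarrow> 'b::ring_1"
  assumes "finite U"
  shows "(\<Sum>T\<in>Pow U. \<Sum>S\<in>Pow T. (-1) ^ (card T - card S) * f S) = f U"
proof -
  define g where "g S = (\<Sum>T\<in>Pow S. (-1) ^ card T * f T)" for S
  have "f U = (\<Sum>T\<in>Pow U. (-1) ^ card T * g T)"
    by (rule inclusion_exclusion_symmetric) (simp_all add: g_def assms)
  also have "\<dots> = (\<Sum>T\<in>Pow U. \<Sum>S\<in>Pow T. (-1) ^ (card T - card S) * f S)"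
  proof (intro sum.cong refl)
    fix T assume "T \<in> Pow U"
    then have T: "finite T" using assms finite_subset by auto
    have "(-1) ^ card T * (-1) ^ card S = ((-1) ^ (card T - card S) :: 'b)" if "S \<subseteq> T" for S
      using card_mono[OF T that]
      by (simp add: neg_one_power_add_eq_neg_one_power_diff flip: power_add)
    then show "(-1) ^ card T * g T = (\<Sum>S\<in>Pow T. (-1) ^ (card T - card S) * f S)"
      by (auto simp: g_def sum_distrib_left mult.assoc[symmetric] intro!: sum.cong)
  qed
  finally show ?thesis ..
qed

lemma sum_Pow_by_card:
  fixes f :: "nat \<Rightarrow> 'b::comm_semiring_1"
  assumes "finite A"
  shows "(\<Sum>U\<in>Pow A. f (card U)) = (\<Sum>i=0..card A. of_nat (card A choose i) * f i)"
proof -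
  have "(\<Sum>U\<in>Pow A. f (card U)) = (\<Sum>i=0..card A. \<Sum>U | U \<in> Pow A \<and> card U = i. f (card U))"
    using assms by (intro sum.group[symmetric]) (auto intro: card_mono)
  also have "\<dots> = (\<Sum>i=0..card A. of_nat (card A choose i) * f i)"
  proof (rule sum.cong[OF refl])
    fix i
    have "{U. U \<in> Pow A \<and> card U = i} = {B. B \<subseteq> A \<and> card B = i}" by auto
    then show "(\<Sum>U | U \<in> Pow A \<and> card U = i. f (card U)) = of_nat (card A choose i) * f i"
      using n_subsets[OF assms, of i] by simp
  qed
  finally show ?thesis .
qed

lemma sum_supersets_by_card:
  fixes f :: "nat \<Rightarrow> 'b::comm_semiring_1"
  assumes "finite A" "T \<subseteq> A"
  shows "(\<Sum>U | U \<subseteq> A \<and> T \<subseteq> U. f (card U))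
       = (\<Sum>i=card T..card A. f i * of_nat ((card A - card T) choose (i - card T)))"
proof -
  have T: "finite T" using assms finite_subset by auto
  have "(\<Sum>U | U \<subseteq> A \<and> T \<subseteq> U. f (card U)) = (\<Sum>W\<in>Pow (A - T). f (card T + card W))"
  proof (rule sum.reindex_bij_witness[where i="\<lambda>W. T \<union> W" and j="\<lambda>U. U - T"])
    fix U assume "U \<in> {U. U \<subseteq> A \<and> T \<subseteq> U}"
    then have "finite U" "T \<subseteq> U" using assms(1) finite_subset by auto
    then show "f (card T + card (U - T)) = f (card U)"
      by (simp add: card_Diff_subset card_mono T)
  qed (use assms in \<open>auto simp: Un_Diff\<close>)
  also have "\<dots> = (\<Sum>m=0..card A - card T. of_nat ((card A - card T) choose m) * f (card T + m))"
    using sum_Pow_by_card[of "A - T" "\<lambda>m. f (card T + m)"] assms T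
    by (simp add: card_Diff_subset)
  also have "\<dots> = (\<Sum>i=card T..card A. f i * of_nat ((card A - card T) choose (i - card T)))"
    using card_mono[OF assms]
    by (intro sum.reindex_bij_witness[where i="\<lambda>i. i - card T" and j="\<lambda>m. card T + m"])
       (auto simp: mult.commute)
  finally show ?thesis .
qed

lemma sum_Pow_insert:
  assumes "finite T" "t \<notin> T"
  shows "(\<Sum>S\<in>Pow (insert t T). f S) = (\<Sum>S\<in>Pow T. f S + f (insert t S))"
proof -
  have "inj_on (insert t) (Pow T)"
    by (rule inj_onI) (metis Diff_insert_absorb PowD subsetD assms(2))
  moreover have "Pow T \<inter> insert t ` Pow T = {}" using assms(2) by auto
  ultimately show ?thesis
    using assms(1) by (simp add: Pow_insert sum.union_disjoint sum.reindex sum.distrib)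
qed

lemma sum_Pow_Pow_swap:
  assumes "finite A"
  shows "(\<Sum>U\<in>Pow A. \<Sum>T\<in>Pow U. f U T) = (\<Sum>T\<in>Pow A. \<Sum>U | U \<subseteq> A \<and> T \<subseteq> U. f U T)"
proof -
  have "(\<Sum>U\<in>Pow A. \<Sum>T\<in>Pow U. f U T) = (\<Sum>U\<in>Pow A. \<Sum>T | T \<in> Pow A \<and> T \<subseteq> U. f U T)"
    by (intro sum.cong refl arg_cong2[where f = sum]) auto
  also have "\<dots> = (\<Sum>T\<in>Pow A. \<Sum>U | U \<in> Pow A \<and> T \<subseteq> U. f U T)"
    using assms by (intro sum.swap_restrict) auto
  finally show ?thesis by simp
qed

lemma sum_swap_pairs:
  "(\<Sum>a\<in>A. \<Sum>b\<in>B. \<Sum>c\<in>C. \<Sum>d\<in>D. f a b c d) = (\<Sum>c\<in>C. \<Sum>d\<in>D. \<Sum>a\<in>A. \<Sum>b\<in>B. f a b c d)"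
proof -
  have "(\<Sum>a\<in>A. \<Sum>b\<in>B. \<Sum>c\<in>C. \<Sum>d\<in>D. f a b c d) = (\<Sum>a\<in>A. \<Sum>c\<in>C. \<Sum>b\<in>B. \<Sum>d\<in>D. f a b c d)"
    by (rule sum.cong[OF refl], rule sum.swap)
  also have "\<dots> = (\<Sum>a\<in>A. \<Sum>c\<in>C. \<Sum>d\<in>D. \<Sum>b\<in>B. f a b c d)"
    by (rule sum.cong[OF refl], rule sum.cong[OF refl], rule sum.swap)
  also have "\<dots> = (\<Sum>c\<in>C. \<Sum>a\<in>A. \<Sum>d\<in>D. \<Sum>b\<in>B. f a b c d)"
    by (rule sum.swap)
  also have "\<dots> = (\<Sum>c\<in>C. \<Sum>d\<in>D. \<Sum>a\<in>A. \<Sum>b\<in>B. f a b c d)"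
    by (rule sum.cong[OF refl], rule sum.swap)
  finally show ?thesis .
qed

lemma sum_PiE_remove:
  assumes "t \<in> I"
  shows "sum f (PiE I B) = (\<Sum>e\<in>B t. \<Sum>g\<in>PiE (I - {t}) B. f (g(t := e)))"
proof -
  have "PiE I B = (\<lambda>(e, g). g(t := e)) ` (B t \<times> PiE (I - {t}) B)"
    using PiE_insert_eq[of t "I - {t}" B] assms by (simp add: insert_absorb)
  moreover have "inj_on (\<lambda>(e, g). g(t := e)) (B t \<times> PiE (I - {t}) B)"
    by (rule inj_combinator) simp
  ultimately show ?thesis
    by (simp add: sum.reindex sum.cartesian_product split_def)
qed

lemma merge_cfg_eq_iff:
  assumes "a \<in> PiE S B" "c \<in> PiE (I - S) B" "a' \<in> PiE S B" "c' \<in> PiE (I - S) B"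
  shows "merge_cfg S a c = merge_cfg S a' c' \<longleftrightarrow> a = a' \<and> c = c'"
proof
  assume eq: "merge_cfg S a c = merge_cfg S a' c'"
  have "a i = a' i \<and> c i = c' i" for i
  proof (cases "i \<in> S")
    case True
    then have "c i = undefined" "c' i = undefined"
      using PiE_arb[OF assms(2)] PiE_arb[OF assms(4)] by auto
    then show ?thesis using fun_cong[OF eq, of i] True by (simp add: merge_cfg_def)
  next
    case False
    then have "a i = undefined" "a' i = undefined"
      using PiE_arb[OF assms(1)] PiE_arb[OF assms(3)] by auto
    then show ?thesis using fun_cong[OF eq, of i] False by (simp add: merge_cfg_def)
  qed
  then show "a = a' \<and> c = c'" by auto
qed simp

lemma sum_PiE_merge:
  assumes "S \<subseteq> I"
  shows "(\<Sum>a\<in>PiE S B. \<Sum>c\<in>PiE (I - S) B. f (merge_cfg S a c)) = sum f (PiE I B)"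
proof -
  let ?m = "\<lambda>(a, c). merge_cfg S a c"
  have inj: "inj_on ?m (PiE S B \<times> PiE (I - S) B)"
    by (rule inj_onI) (clarsimp simp: merge_cfg_eq_iff)
  have img: "?m ` (PiE S B \<times> PiE (I - S) B) = PiE I B"
  proof
    show "?m ` (PiE S B \<times> PiE (I - S) B) \<subseteq> PiE I B"
      using assms by (auto simp: merge_cfg_def PiE_def extensional_def Pi_def)
    show "PiE I B \<subseteq> ?m ` (PiE S B \<times> PiE (I - S) B)"
    proof
      fix x assume x: "x \<in> PiE I B"
      then have "x = ?m (restrict x S, restrict x (I - S))"
        using assms by (auto simp: merge_cfg_def PiE_def extensional_def fun_eq_iff)
      moreover have "(restrict x S, restrict x (I - S)) \<in> PiE S B \<times> PiE (I - S) B"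
        using x assms by auto
      ultimately show "x \<in> ?m ` (PiE S B \<times> PiE (I - S) B)" by blast
    qed
  qed
  have "sum f (PiE I B) = sum (f \<circ> ?m) (PiE S B \<times> PiE (I - S) B)"
    using sum.reindex[OF inj, of f] img by simp
  then show ?thesis by (simp add: sum.cartesian_product split_def)
qed

lemma finite_configs: "finite S \<Longrightarrow> finite (configs S q)"
  by (simp add: configs_def finite_PiE)

lemma card_configs: "finite S \<Longrightarrow> card (configs S q) = q ^ card S"
  by (simp add: configs_def card_PiE)

lemma merge_cfg_compl:
  assumes "a \<in> configs S q" "c \<in> configs ({0..<n} - S) q"
  shows "merge_cfg ({0..<n} - S) c a = merge_cfg S a c"
  using assms by (auto simp: merge_cfg_def configs_def PiE_def extensional_def fun_eq_iff)

lemma cmod_sum_squared: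
  "(cmod (sum z A))\<^sup>2 = (\<Sum>a\<in>A. \<Sum>b\<in>A. Re (z a * cnj (z b)))"
proof -
  have "(cmod w)\<^sup>2 = Re (w * cnj w)" for w
    unfolding cmod_power2 by (simp add: power2_eq_square)
  then have "(cmod (sum z A))\<^sup>2 = Re (sum z A * cnj (sum z A))" .
  also have "sum z A * cnj (sum z A) = (\<Sum>a\<in>A. \<Sum>b\<in>A. z a * cnj (z b))"
    by (simp add: sum_product cnj_sum)
  finally show ?thesis by (simp add: Re_sum)
qed

lemma sum_cmod_diff_squared:
  "(\<Sum>a\<in>A. \<Sum>b\<in>A. (cmod (z a - z b))\<^sup>2)
   = 2 * real (card A) * (\<Sum>a\<in>A. (cmod (z a))\<^sup>2) - 2 * (cmod (sum z A))\<^sup>2"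
proof -
  have "(cmod (x - y))\<^sup>2 = (cmod x)\<^sup>2 + (cmod y)\<^sup>2 - 2 * Re (x * cnj y)" for x y
    unfolding cmod_power2 by (simp add: power2_eq_square algebra_simps)
  then have "(\<Sum>a\<in>A. \<Sum>b\<in>A. (cmod (z a - z b))\<^sup>2)
     = (\<Sum>a\<in>A. \<Sum>b\<in>A. (cmod (z a))\<^sup>2) + (\<Sum>a\<in>A. \<Sum>b\<in>A. (cmod (z b))\<^sup>2)
       - 2 * (\<Sum>a\<in>A. \<Sum>b\<in>A. Re (z a * cnj (z b)))"
    by (simp add: sum.distrib sum_subtractf sum_distrib_left)
  also have "\<dots> = 2 * real (card A) * (\<Sum>a\<in>A. (cmod (z a))\<^sup>2) - 2 * (cmod (sum z A))\<^sup>2"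
    by (simp add: cmod_sum_squared sum_distrib_left[symmetric] sum.swap[of "\<lambda>a b. (cmod (z b))\<^sup>2"])
  finally show ?thesis .
qed

lemma sum_cmod_gram_swap:
  "(\<Sum>a\<in>X. \<Sum>b\<in>X. (cmod (\<Sum>c\<in>Y. A a c * cnj (A b c)))\<^sup>2)
   = (\<Sum>c\<in>Y. \<Sum>d\<in>Y. (cmod (\<Sum>a\<in>X. A a c * cnj (A a d)))\<^sup>2)"
proof -
  have L: "(cmod (\<Sum>c\<in>Y. A a c * cnj (A b c)))\<^sup>2
      = (\<Sum>c\<in>Y. \<Sum>d\<in>Y. Re (A a c * cnj (A b c) * cnj (A a d) * A b d))" for a b
    by (simp add: cmod_sum_squared mult.assoc)
  have R: "(cmod (\<Sum>a\<in>X. A a c * cnj (A a d)))\<^sup>2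
      = (\<Sum>a\<in>X. \<Sum>b\<in>X. Re (A a c * cnj (A b c) * cnj (A a d) * A b d))" for c d
    by (simp add: cmod_sum_squared mult_ac)
  show ?thesis
    unfolding L R by (rule sum_swap_pairs)
qed

type_synonym cfg = "nat \<Rightarrow> nat"

definition partial_trace ::
  "nat \<Rightarrow> nat \<Rightarrow> nat set \<Rightarrow> (cfg \<Rightarrow> cfg \<Rightarrow> complex) \<Rightarrow> cfg \<Rightarrow> cfg \<Rightarrow> complex" where
  "partial_trace n q S r a b = (\<Sum>c\<in>configs ({0..<n} - S) q. r (merge_cfg S a c) (merge_cfg S b c))"

definition frobenius_sq :: "nat \<Rightarrow> nat set \<Rightarrow> (cfg \<Rightarrow> cfg \<Rightarrow> complex) \<Rightarrow> real" where
  "frobenius_sq q S M = (\<Sum>a\<in>configs S q. \<Sum>b\<in>configs S q. (cmod (M a b))\<^sup>2)"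

definition purity :: "nat \<Rightarrow> nat \<Rightarrow> (cfg \<Rightarrow> cfg \<Rightarrow> complex) \<Rightarrow> nat set \<Rightarrow> real" where
  "purity n q r S = frobenius_sq q S (partial_trace n q S r)"

definition scaled_purity :: "nat \<Rightarrow> nat \<Rightarrow> (cfg \<Rightarrow> cfg \<Rightarrow> complex) \<Rightarrow> nat set \<Rightarrow> real" where
  "scaled_purity n q r S = real q ^ card S * purity n q r S"

text \<open>Up to normalisation, the squared norm of the component of r supported exactly on the
  parties in T, for an orthogonal basis of one-site operators containing the identity.\<close>
definition sector_weight :: "nat \<Rightarrow> nat \<Rightarrow> (cfg \<Rightarrow> cfg \<Rightarrow> complex) \<Rightarrow> nat set \<Rightarrow> real" where
  "sector_weight n q r T = (\<Sum>S\<in>Pow T. (-1) ^ (card T - card S) * scaled_purity n q r S)"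

lemma partial_trace_diff:
  "partial_trace n q S (\<lambda>x y. r x y - s x y) = (\<lambda>a b. partial_trace n q S r a b - partial_trace n q S s a b)"
  by (simp add: partial_trace_def fun_eq_iff sum_subtractf)

lemma partial_trace_sum:
  "partial_trace n q S (\<lambda>x y. \<Sum>i\<in>A. r i x y) = (\<lambda>a b. \<Sum>i\<in>A. partial_trace n q S (r i) a b)"
  unfolding partial_trace_def fun_eq_iff by (auto intro: sum.swap)

lemma frobenius_sq_variance:
  "(\<Sum>a\<in>A. \<Sum>b\<in>A. frobenius_sq q S (\<lambda>x y. M a x y - M b x y))
   = 2 * real (card A) * (\<Sum>a\<in>A. frobenius_sq q S (M a)) - 2 * frobenius_sq q S (\<lambda>x y. \<Sum>a\<in>A. M a x y)"
proof -
  have "(\<Sum>a\<in>A. \<Sum>b\<in>A. frobenius_sq q S (\<lambda>x y. M a x y - M b x y))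
     = (\<Sum>x\<in>configs S q. \<Sum>y\<in>configs S q. \<Sum>a\<in>A. \<Sum>b\<in>A. (cmod (M a x y - M b x y))\<^sup>2)"
    unfolding frobenius_sq_def by (rule sum_swap_pairs)
  also have "\<dots> = (\<Sum>x\<in>configs S q. \<Sum>y\<in>configs S q.
       2 * real (card A) * (\<Sum>a\<in>A. (cmod (M a x y))\<^sup>2) - 2 * (cmod (\<Sum>a\<in>A. M a x y))\<^sup>2)"
    by (simp only: sum_cmod_diff_squared)
  also have "\<dots> = 2 * real (card A) * (\<Sum>a\<in>A. frobenius_sq q S (M a))
       - 2 * frobenius_sq q S (\<lambda>x y. \<Sum>a\<in>A. M a x y)"
    by (simp add: frobenius_sq_def sum_subtractf sum_distrib_left sum.swap[of _ A])
  finally show ?thesis .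
qed

lemma sector_weight_variance:
  "(\<Sum>a\<in>A. \<Sum>b\<in>A. sector_weight n q (\<lambda>x y. r a x y - r b x y) T)
   = 2 * real (card A) * (\<Sum>a\<in>A. sector_weight n q (r a) T)
     - 2 * sector_weight n q (\<lambda>x y. \<Sum>a\<in>A. r a x y) T"
proof -
  define c where "c S = (-1) ^ (card T - card S) * real q ^ card S" for S :: "nat set"
  define F where "F a S = frobenius_sq q S (partial_trace n q S (r a))" for a S
  have "(\<Sum>a\<in>A. \<Sum>b\<in>A. sector_weight n q (\<lambda>x y. r a x y - r b x y) T)
      = (\<Sum>S\<in>Pow T. c S * (\<Sum>a\<in>A. \<Sum>b\<in>A.
           frobenius_sq q S (\<lambda>x y. partial_trace n q S (r a) x y - partial_trace n q S (r b) x y)))"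
    by (simp add: sector_weight_def scaled_purity_def purity_def partial_trace_diff c_def
        sum_distrib_left mult.assoc sum.swap[of _ "Pow T"])
  also have "\<dots> = (\<Sum>S\<in>Pow T. c S * (2 * real (card A) * (\<Sum>a\<in>A. F a S)
        - 2 * frobenius_sq q S (\<lambda>x y. \<Sum>a\<in>A. partial_trace n q S (r a) x y)))"
    by (simp only: frobenius_sq_variance F_def)
  also have "\<dots> = 2 * real (card A) * (\<Sum>a\<in>A. \<Sum>S\<in>Pow T. c S * F a S)
        - 2 * (\<Sum>S\<in>Pow T. c S * frobenius_sq q S (\<lambda>x y. \<Sum>a\<in>A. partial_trace n q S (r a) x y))"
    by (simp add: right_diff_distrib sum_subtractf sum_distrib_left mult.left_commute
        sum.swap[of _ A])
  finally show ?thesis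
    by (simp add: sector_weight_def scaled_purity_def purity_def partial_trace_sum c_def F_def mult.assoc)
qed

text \<open>The (a, b) block of r at site t, as a kernel living on configurations that are 0 at t.\<close>
definition site_block :: "nat \<Rightarrow> (cfg \<Rightarrow> cfg \<Rightarrow> complex) \<Rightarrow> nat \<Rightarrow> nat \<Rightarrow> cfg \<Rightarrow> cfg \<Rightarrow> complex" where
  "site_block t r a b x y = (if x t = 0 \<and> y t = 0 then r (x(t := a)) (y(t := b)) else 0)"

lemma partial_trace_site_block_diag:
  assumes "t \<notin> S" "t < n" "0 < q"
  shows "partial_trace n q S (\<lambda>x y. \<Sum>a\<in>{0..<q}. site_block t r a a x y) = partial_trace n q S r"
proof (intro ext)
  fix \<alpha> \<beta>
  have t: "t \<in> {0..<n} - S" using assms by auto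
  have at: "merge_cfg S x (g(t := e)) t = e" for x g e
    using assms(1) by (simp add: merge_cfg_def)
  have upd: "(merge_cfg S x (g(t := e)))(t := a) = merge_cfg S x (g(t := a))" for x g e a
    using assms(1) by (auto simp: merge_cfg_def fun_eq_iff)
  have "partial_trace n q S (\<lambda>x y. \<Sum>a\<in>{0..<q}. site_block t r a a x y) \<alpha> \<beta>
     = (\<Sum>e\<in>{0..<q}. \<Sum>g\<in>PiE ({0..<n} - S - {t}) (\<lambda>_. {0..<q}).
          \<Sum>a\<in>{0..<q}. site_block t r a a (merge_cfg S \<alpha> (g(t := e))) (merge_cfg S \<beta> (g(t := e))))"
    unfolding partial_trace_def configs_def by (rule sum_PiE_remove[OF t])
  also have "\<dots> = (\<Sum>e\<in>{0..<q}. if e = 0 then (\<Sum>g\<in>PiE ({0..<n} - S - {t}) (\<lambda>_. {0..<q}).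
          \<Sum>a\<in>{0..<q}. r (merge_cfg S \<alpha> (g(t := a))) (merge_cfg S \<beta> (g(t := a)))) else 0)"
    by (rule sum.cong[OF refl]) (simp add: site_block_def at upd)
  also have "\<dots> = (\<Sum>g\<in>PiE ({0..<n} - S - {t}) (\<lambda>_. {0..<q}).
          \<Sum>a\<in>{0..<q}. r (merge_cfg S \<alpha> (g(t := a))) (merge_cfg S \<beta> (g(t := a))))"
    using assms(3) by simp
  also have "\<dots> = partial_trace n q S r \<alpha> \<beta>"
    unfolding partial_trace_def configs_def sum_PiE_remove[OF t] by (rule sum.swap)
  finally show "partial_trace n q S (\<lambda>x y. \<Sum>a\<in>{0..<q}. site_block t r a a x y) \<alpha> \<beta>
      = partial_trace n q S r \<alpha> \<beta>" .
qed

lemma partial_trace_insert: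
  assumes "t \<notin> S" "t < n" "0 < q"
  shows "partial_trace n q (insert t S) r (\<alpha>(t := a)) (\<beta>(t := b))
       = partial_trace n q S (site_block t r a b) \<alpha> \<beta>"
proof -
  have t: "t \<in> {0..<n} - S" using assms by auto
  have at: "merge_cfg S x (g(t := e)) t = e" for x g e
    using assms(1) by (simp add: merge_cfg_def)
  have upd: "(merge_cfg S x (g(t := e)))(t := a) = merge_cfg (insert t S) (x(t := a)) g" for x g e a
    using assms(1) by (auto simp: merge_cfg_def fun_eq_iff)
  have compl: "{0..<n} - S - {t} = {0..<n} - insert t S" by auto
  have "partial_trace n q S (site_block t r a b) \<alpha> \<beta>
     = (\<Sum>e\<in>{0..<q}. \<Sum>g\<in>PiE ({0..<n} - S - {t}) (\<lambda>_. {0..<q}).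
          site_block t r a b (merge_cfg S \<alpha> (g(t := e))) (merge_cfg S \<beta> (g(t := e))))"
    unfolding partial_trace_def configs_def by (rule sum_PiE_remove[OF t])
  also have "\<dots> = (\<Sum>e\<in>{0..<q}. if e = 0 then (\<Sum>g\<in>PiE ({0..<n} - S - {t}) (\<lambda>_. {0..<q}).
          r (merge_cfg (insert t S) (\<alpha>(t := a)) g) (merge_cfg (insert t S) (\<beta>(t := b)) g)) else 0)"
    by (rule sum.cong[OF refl]) (simp add: site_block_def at upd)
  also have "\<dots> = (\<Sum>g\<in>PiE ({0..<n} - S - {t}) (\<lambda>_. {0..<q}).
          r (merge_cfg (insert t S) (\<alpha>(t := a)) g) (merge_cfg (insert t S) (\<beta>(t := b)) g))"
    using assms(3) by simp
  finally show ?thesis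
    unfolding partial_trace_def configs_def compl ..
qed

lemma frobenius_sq_insert:
  assumes "t \<notin> S"
  shows "frobenius_sq q (insert t S) M
       = (\<Sum>a\<in>{0..<q}. \<Sum>b\<in>{0..<q}. frobenius_sq q S (\<lambda>x y. M (x(t := a)) (y(t := b))))"
proof -
  have S: "insert t S - {t} = S" using assms by auto
  have "frobenius_sq q (insert t S) M
      = (\<Sum>a\<in>{0..<q}. \<Sum>x\<in>configs S q. \<Sum>b\<in>{0..<q}. \<Sum>y\<in>configs S q. (cmod (M (x(t := a)) (y(t := b))))\<^sup>2)"
    unfolding frobenius_sq_def configs_def by (simp add: sum_PiE_remove[of t] S)
  also have "\<dots> = (\<Sum>a\<in>{0..<q}. \<Sum>b\<in>{0..<q}. \<Sum>x\<in>configs S q. \<Sum>y\<in>configs S q. (cmod (M (x(t := a)) (y(t := b))))\<^sup>2)"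
    by (rule sum.cong[OF refl], rule sum.swap)
  finally show ?thesis
    unfolding frobenius_sq_def .
qed

lemma purity_site_block_diag:
  assumes "t \<notin> S" "t < n" "0 < q"
  shows "purity n q (\<lambda>x y. \<Sum>a\<in>{0..<q}. site_block t r a a x y) S = purity n q r S"
  unfolding purity_def partial_trace_site_block_diag[OF assms] ..

lemma purity_insert:
  assumes "t \<notin> S" "t < n" "0 < q"
  shows "purity n q r (insert t S) = (\<Sum>a\<in>{0..<q}. \<Sum>b\<in>{0..<q}. purity n q (site_block t r a b) S)"
  unfolding purity_def frobenius_sq_insert[OF assms(1)] partial_trace_insert[OF assms] ..

lemma sector_weight_insert:
  assumes "finite T" "t \<notin> T" "t < n" "0 < q"
  shows "sector_weight n q r (insert t T)
       = real q * (\<Sum>a\<in>{0..<q}. \<Sum>b\<in>{0..<q}. sector_weight n q (site_block t r a b) T)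
         - sector_weight n q (\<lambda>x y. \<Sum>a\<in>{0..<q}. site_block t r a a x y) T"
proof -
  define c where "c S = (-1) ^ (card T - card S) * real q ^ card S" for S :: "nat set"
  have "(-1) ^ (card (insert t T) - card S) * scaled_purity n q r S
        + (-1) ^ (card (insert t T) - card (insert t S)) * scaled_purity n q r (insert t S)
      = real q * (\<Sum>a\<in>{0..<q}. \<Sum>b\<in>{0..<q}. c S * purity n q (site_block t r a b) S)
        - c S * purity n q (\<lambda>x y. \<Sum>a\<in>{0..<q}. site_block t r a a x y) S"
    if "S \<in> Pow T" for S
  proof -
    have S: "t \<notin> S" "finite S" "card S \<le> card T"
      using that assms(1,2) finite_subset card_mono by auto
    then have "card (insert t T) - card S = Suc (card T - card S)"
      "card (insert t T) - card (insert t S) = card T - card S"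
      using assms(1,2) by auto
    then show ?thesis
      using S by (simp add: c_def scaled_purity_def purity_site_block_diag purity_insert assms
          sum_distrib_left mult_ac)
  qed
  then show ?thesis
    unfolding sector_weight_def sum_Pow_insert[OF assms(1,2)]
    by (simp add: sum_subtractf sum_distrib_left c_def scaled_purity_def mult.assoc
        sum.swap[of _ "Pow T"])
qed

lemma sector_weight_nonneg:
  assumes "finite T" "T \<subseteq> {0..<n}" "0 < q"
  shows "0 \<le> sector_weight n q r T"
  using assms(1,2)
proof (induction T arbitrary: r rule: finite_induct)
  case empty
  show ?case by (simp add: sector_weight_def scaled_purity_def purity_def frobenius_sq_def sum_nonneg)
next
  case (insert t T)
  have t: "t < n" and IH: "\<And>r. 0 \<le> sector_weight n q r T"
    using insert by auto
  let ?W = "\<lambda>a b. sector_weight n q (site_block t r a b) T"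
  have "0 \<le> (\<Sum>a\<in>{0..<q}. \<Sum>b\<in>{0..<q}.
      sector_weight n q (\<lambda>x y. site_block t r a a x y - site_block t r b b x y) T)"
    by (intro sum_nonneg IH)
  then have "sector_weight n q (\<lambda>x y. \<Sum>a\<in>{0..<q}. site_block t r a a x y) T
      \<le> real q * (\<Sum>a\<in>{0..<q}. ?W a a)"
    unfolding sector_weight_variance by simp
  also have "\<dots> \<le> real q * (\<Sum>a\<in>{0..<q}. \<Sum>b\<in>{0..<q}. ?W a b)"
    by (intro mult_left_mono sum_mono member_le_sum IH) auto
  finally show ?case
    unfolding sector_weight_insert[OF insert.hyps t assms(3)] by simp
qed

definition ket_bra :: "(cfg \<Rightarrow> complex) \<Rightarrow> cfg \<Rightarrow> cfg \<Rightarrow> complex" where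
  "ket_bra psi x y = psi x * cnj (psi y)"

lemma partial_trace_ket_bra: "partial_trace n q S (ket_bra psi) = reduced_state n q psi S"
  by (simp add: partial_trace_def ket_bra_def reduced_state_def fun_eq_iff)

lemma sum_reduced_state_diag:
  assumes "S \<subseteq> {0..<n}"
  shows "(\<Sum>a\<in>configs S q. reduced_state n q psi S a a) = (\<Sum>x\<in>configs {0..<n} q. psi x * cnj (psi x))"
  unfolding reduced_state_def configs_def
  by (rule sum_PiE_merge[OF assms, where f = "\<lambda>x. psi x * cnj (psi x)"])

lemma reduced_state_partial_trace:
  assumes "S \<subseteq> S'" "S' \<subseteq> {0..<n}"
  shows "reduced_state n q psi S a b
       = (\<Sum>g\<in>configs (S' - S) q. reduced_state n q psi S' (merge_cfg S a g) (merge_cfg S b g))"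
proof -
  have merge: "merge_cfg S x (merge_cfg (S' - S) g d) = merge_cfg S' (merge_cfg S x g) d" for x g d
    using assms(1) by (auto simp: merge_cfg_def fun_eq_iff)
  have compl: "{0..<n} - S - (S' - S) = {0..<n} - S'" using assms by auto
  have "reduced_state n q psi S a b
      = (\<Sum>g\<in>configs (S' - S) q. \<Sum>d\<in>configs ({0..<n} - S - (S' - S)) q.
           psi (merge_cfg S a (merge_cfg (S' - S) g d)) * cnj (psi (merge_cfg S b (merge_cfg (S' - S) g d))))"
    unfolding reduced_state_def configs_def
    by (rule sum_PiE_merge[symmetric]) (use assms in auto)
  then show ?thesis
    unfolding merge compl by (simp add: reduced_state_def)
qed

lemma k_uniform_sum_norm:
  assumes "k_uniform n q k psi" "k \<le> n" "0 < q"
  shows "(\<Sum>x\<in>configs {0..<n} q. psi x * cnj (psi x)) = 1"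
proof -
  have S: "{0..<k} \<subseteq> {0..<n}" "card {0..<k} = k" using assms(2) by auto
  have "(\<Sum>x\<in>configs {0..<n} q. psi x * cnj (psi x))
      = (\<Sum>a\<in>configs {0..<k} q. reduced_state n q psi {0..<k} a a)"
    using sum_reduced_state_diag[OF S(1)] by simp
  also have "\<dots> = (\<Sum>a\<in>configs {0..<k} q. 1 / of_nat (q ^ k))"
    using assms(1) S unfolding k_uniform_def by (intro sum.cong) auto
  also have "\<dots> = 1" using assms(3) by (simp add: card_configs)
  finally show ?thesis .
qed

lemma k_uniform_reduced_state:
  assumes "k_uniform n q k psi" "k \<le> n" "0 < q" "S \<subseteq> {0..<n}" "card S \<le> k"
    and ab: "a \<in> configs S q" "b \<in> configs S q"
  shows "reduced_state n q psi S a b = (if a = b then 1 / of_nat (q ^ card S) else 0)"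
proof -
  have S: "finite S" using assms(4) finite_subset by auto
  have "k - card S \<le> card ({0..<n} - S)" using assms(2,4,5) S by (simp add: card_Diff_subset)
  then obtain W where W: "W \<subseteq> {0..<n} - S" "card W = k - card S" "finite W"
    by (rule obtain_subset_with_card_n)
  define S' where "S' = S \<union> W"
  have "S \<inter> W = {}" using W by auto
  then have S': "S \<subseteq> S'" "S' \<subseteq> {0..<n}" "S' - S = W" "card S' = k"
    using W assms(4,5) S by (auto simp: S'_def card_Un_disjoint)
  have merge_in: "merge_cfg S x g \<in> configs S' q" if "x \<in> configs S q" "g \<in> configs W q" for x g
    using that by (auto simp: configs_def merge_cfg_def S'_def PiE_def extensional_def Pi_def)
  have merge_eq: "merge_cfg S a g = merge_cfg S b g \<longleftrightarrow> a = b" if "g \<in> configs W q" for g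
    using that ab merge_cfg_eq_iff[of a S _ g S'] S'(3) by (auto simp: configs_def)
  have "reduced_state n q psi S a b
      = (\<Sum>g\<in>configs W q. reduced_state n q psi S' (merge_cfg S a g) (merge_cfg S b g))"
    using reduced_state_partial_trace[OF S'(1,2)] S'(3) by simp
  also have "\<dots> = (\<Sum>g\<in>configs W q. if a = b then 1 / of_nat (q ^ k) else 0)"
    using assms(1) S' merge_in ab merge_eq unfolding k_uniform_def by (intro sum.cong) auto
  also have "\<dots> = (if a = b then 1 / of_nat (q ^ card S) else 0)"
  proof -
    have "k = card S + card W" using W assms(5) by simp
    then have "(of_nat (q ^ card W) :: complex) / of_nat (q ^ k) = 1 / of_nat (q ^ card S)"
      using assms(3) by (simp add: power_add field_simps)
    then show ?thesis using W by (simp add: card_configs)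
  qed
  finally show ?thesis .
qed

lemma k_uniform_scaled_purity:
  assumes "k_uniform n q k psi" "k \<le> n" "0 < q" "S \<subseteq> {0..<n}" "card S \<le> k"
  shows "scaled_purity n q (ket_bra psi) S = 1"
proof -
  have S: "finite S" using assms(4) finite_subset by auto
  have "purity n q (ket_bra psi) S
      = (\<Sum>a\<in>configs S q. \<Sum>b\<in>configs S q. if a = b then 1 / (real q ^ card S)\<^sup>2 else 0)"
    unfolding purity_def frobenius_sq_def partial_trace_ket_bra
    using k_uniform_reduced_state[OF assms]
    by (intro sum.cong refl) (simp add: norm_divide power_divide norm_power)
  also have "\<dots> = 1 / real q ^ card S"
    using S assms(3) by (simp add: finite_configs card_configs power2_eq_square)
  finally show ?thesis
    using assms(3) by (simp add: scaled_purity_def)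
qed

lemma purity_ket_bra_compl:
  assumes "S \<subseteq> {0..<n}"
  shows "purity n q (ket_bra psi) ({0..<n} - S) = purity n q (ket_bra psi) S"
proof -
  have S: "{0..<n} - ({0..<n} - S) = S" using assms by auto
  have "purity n q (ket_bra psi) ({0..<n} - S)
      = (\<Sum>c\<in>configs ({0..<n} - S) q. \<Sum>d\<in>configs ({0..<n} - S) q.
          (cmod (\<Sum>a\<in>configs S q. psi (merge_cfg S a c) * cnj (psi (merge_cfg S a d))))\<^sup>2)"
    unfolding purity_def frobenius_sq_def partial_trace_ket_bra reduced_state_def S
    by (intro sum.cong refl) (simp add: merge_cfg_compl)
  also have "\<dots> = purity n q (ket_bra psi) S"
    unfolding purity_def frobenius_sq_def partial_trace_ket_bra reduced_state_def
    by (rule sum_cmod_gram_swap[symmetric])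
  finally show ?thesis .
qed

lemma scaled_purity_ket_bra_compl:
  assumes "S \<subseteq> {0..<n}" "n \<le> 2 * card S" "0 < q"
  shows "scaled_purity n q (ket_bra psi) S
       = real q ^ (2 * card S - n) * scaled_purity n q (ket_bra psi) ({0..<n} - S)"
proof -
  have "card ({0..<n} - S) = n - card S"
    using assms(1) by (simp add: card_Diff_subset finite_subset)
  moreover have "card S = (2 * card S - n) + (n - card S)"
    using assms(1,2) card_mono[OF _ assms(1)] by simp
  ultimately show ?thesis
    unfolding scaled_purity_def purity_ket_bra_compl[OF assms(1)]
    by (metis power_add mult.assoc)
qed

lemma one_le_scaled_purity_ket_bra:
  assumes "(\<Sum>x\<in>configs {0..<n} q. psi x * cnj (psi x)) = 1" "S \<subseteq> {0..<n}"
  shows "1 \<le> scaled_purity n q (ket_bra psi) S"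
proof -
  have S: "finite S" using assms(2) finite_subset by auto
  let ?z = "\<lambda>a. reduced_state n q psi S a a"
  have "sum ?z (configs S q) = 1" using sum_reduced_state_diag[OF assms(2)] assms(1) by simp
  moreover have "0 \<le> (\<Sum>a\<in>configs S q. \<Sum>b\<in>configs S q. (cmod (?z a - ?z b))\<^sup>2)"
    by (intro sum_nonneg) auto
  ultimately have "1 \<le> real q ^ card S * (\<Sum>a\<in>configs S q. (cmod (?z a))\<^sup>2)"
    unfolding sum_cmod_diff_squared using S by (simp add: card_configs)
  also have "\<dots> \<le> scaled_purity n q (ket_bra psi) S"
    unfolding scaled_purity_def purity_def frobenius_sq_def partial_trace_ket_bra
    using S by (intro mult_left_mono sum_mono member_le_sum) (auto simp: finite_configs)
  finally show ?thesis .
qed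

lemma scaled_purity_eq_sum_sector_weight:
  assumes "finite U"
  shows "scaled_purity n q r U = (\<Sum>T\<in>Pow U. sector_weight n q r T)"
  unfolding sector_weight_def by (rule sum_Pow_moebius_inversion[OF assms, symmetric])

lemma k_uniform_sector_weight:
  assumes "k_uniform n q k psi" "k \<le> n" "0 < q" "T \<subseteq> {0..<n}" "card T \<le> k"
  shows "sector_weight n q (ket_bra psi) T = (if T = {} then 1 else 0)"
proof -
  have T: "finite T" using assms(4) finite_subset by auto
  have "(if T = {} then 1 else 0) = (\<Sum>S\<in>Pow T. (-1) ^ (card T - card S) * (1 :: real))"
    by (rule inclusion_exclusion_mobius[OF _ T]) (simp add: sum.delta)
  also have "\<dots> = sector_weight n q (ket_bra psi) T"
    unfolding sector_weight_def
    using assms k_uniform_scaled_purity[OF assms(1-3)] card_mono[OF T]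
    by (intro sum.cong refl) (simp, meson order_trans)
  finally show ?thesis ..
qed

lemma k_uniform_weighted_scaled_purity_nonpos:
  fixes p :: "nat \<Rightarrow> real"
  assumes "k_uniform n q k psi" "k \<le> n" "0 < q"
    and "\<forall>j \<in> {k+1..n}. (\<Sum>i=j..n. p i * real ((n - j) choose (i - j))) \<le> 0"
  shows "(\<Sum>U\<in>Pow {0..<n}. p (card U) * (scaled_purity n q (ket_bra psi) U - 1)) \<le> 0"
proof -
  define Q where "Q T = sector_weight n q (ket_bra psi) T" for T
  define G where "G T = (\<Sum>U | U \<subseteq> {0..<n} \<and> T \<subseteq> U. p (card U))" for T
  have Q_G_nonpos: "Q T * G T \<le> 0" if "T \<in> Pow {0..<n} - {{}}" for T
  proof (cases "card T \<le> k")
    case True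
    then show ?thesis using that k_uniform_sector_weight[OF assms(1-3)] by (simp add: Q_def)
  next
    case False
    have T: "T \<subseteq> {0..<n}" using that by simp
    then have "card T \<in> {k+1..n}" using False card_mono[OF _ T] by simp
    then have "G T \<le> 0"
      using assms(4) sum_supersets_by_card[OF _ T, of p] by (simp add: G_def)
    moreover have "0 \<le> Q T"
      unfolding Q_def using T finite_subset by (intro sector_weight_nonneg assms(3)) auto
    ultimately show ?thesis by (simp add: mult_nonneg_nonpos)
  qed
  have "(\<Sum>U\<in>Pow {0..<n}. p (card U) * scaled_purity n q (ket_bra psi) U)
      = (\<Sum>U\<in>Pow {0..<n}. \<Sum>T\<in>Pow U. p (card U) * Q T)"
    by (intro sum.cong refl)
       (simp add: scaled_purity_eq_sum_sector_weight finite_subset[of _ "{0..<n}"] sum_distrib_left Q_def)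
  also have "\<dots> = (\<Sum>T\<in>Pow {0..<n}. Q T * G T)"
    by (simp add: sum_Pow_Pow_swap G_def sum_distrib_left sum_distrib_right mult.commute)
  also have "\<dots> = Q {} * G {} + (\<Sum>T\<in>Pow {0..<n} - {{}}. Q T * G T)"
    by (rule sum.remove) auto
  also have "\<dots> \<le> G {}"
  proof -
    have "(\<Sum>T\<in>Pow {0..<n} - {{}}. Q T * G T) \<le> 0"
      by (rule sum_nonpos) (rule Q_G_nonpos)
    moreover have "Q {} = 1"
      unfolding Q_def using k_uniform_sector_weight[OF assms(1-3), of "{}"] by simp
    ultimately show ?thesis by simp
  qed
  finally show ?thesis
    by (simp add: G_def Pow_def right_diff_distrib sum_subtractf)
qed

lemma k_uniform_scaled_purity_excess:
  fixes p :: "nat \<Rightarrow> real"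
  assumes "k_uniform n q k psi" "k + 1 \<le> n div 2" "0 < q" "U \<subseteq> {0..<n}"
    and "\<forall>i \<in> {k+1..n-(k+1)}. p i \<ge> 0"
  shows "(if n div 2 < card U then p (card U) * (real q ^ (2 * card U - n) - 1) else 0)
       \<le> p (card U) * (scaled_purity n q (ket_bra psi) U - 1)"
proof -
  define i where "i = card U"
  have kn: "k \<le> n" using assms(2) by linarith
  have compl: "{0..<n} - U \<subseteq> {0..<n}" "card ({0..<n} - U) = n - i"
    using assms(4) by (auto simp: i_def card_Diff_subset finite_subset)
  have norm: "(\<Sum>x\<in>configs {0..<n} q. psi x * cnj (psi x)) = 1"
    by (rule k_uniform_sum_norm[OF assms(1) kn assms(3)])
  let ?\<pi> = "scaled_purity n q (ket_bra psi)"
  consider "i \<le> k" | "n - k \<le> i" | "k < i" "i < n - k" by linarith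
  then show ?thesis
  proof cases
    case 1
    then show ?thesis
      using assms(2) k_uniform_scaled_purity[OF assms(1) kn assms(3,4)] by (simp add: i_def)
  next
    case 2
    then have "n div 2 < i" "n \<le> 2 * i" using assms(2) by linarith+
    moreover have "?\<pi> ({0..<n} - U) = 1"
      using 2 compl by (intro k_uniform_scaled_purity[OF assms(1) kn assms(3)]) auto
    ultimately show ?thesis
      using scaled_purity_ket_bra_compl[OF assms(4) _ assms(3)] by (simp add: i_def)
  next
    case 3
    then have p: "0 \<le> p i" using assms(5) by auto
    show ?thesis
    proof (cases "n div 2 < i")
      case True
      then have "n \<le> 2 * i" by linarith
      have "real q ^ (2 * i - n) * 1 \<le> real q ^ (2 * i - n) * ?\<pi> ({0..<n} - U)"
        by (intro mult_left_mono one_le_scaled_purity_ket_bra[OF norm compl(1)]) simp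
      then have "real q ^ (2 * i - n) \<le> ?\<pi> U"
        using scaled_purity_ket_bra_compl[OF assms(4) _ assms(3)] \<open>n \<le> 2 * i\<close>
        by (simp add: i_def)
      then show ?thesis using True p by (simp add: i_def mult_left_mono)
    next
      case False
      then show ?thesis
        using p one_le_scaled_purity_ket_bra[OF norm assms(4)] by (simp add: i_def)
    qed
  qed
qed

theorem lemma1:
  fixes q n k :: nat and p :: "nat \<Rightarrow> real"
  assumes "q \<ge> 2"
    and "k + 1 \<le> n div 2"
    and "\<forall>i \<in> {k+1..n-(k+1)}. p i \<ge> 0"
    and "\<forall>j \<in> {k+1..n}. (\<Sum>i=j..n. p i * real ((n - j) choose (i - j))) \<le> 0"
    and "(\<Sum>i=n div 2 + 1..n. p i * (real q ^ (2*i - n) - 1) * real (n choose i)) > 0"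
  shows "\<not> (\<exists>psi. k_uniform n q k psi)"
proof
  assume "\<exists>psi. k_uniform n q k psi"
  then obtain psi where psi: "k_uniform n q k psi" ..
  have q: "0 < q" and kn: "k \<le> n" using assms(1,2) by linarith+
  define h where "h i = (if n div 2 < i then p i * (real q ^ (2 * i - n) - 1) else 0)" for i
  have "(\<Sum>i=n div 2 + 1..n. p i * (real q ^ (2*i - n) - 1) * real (n choose i))
      = (\<Sum>i=0..n. real (n choose i) * h i)"
    by (rule sum.mono_neutral_cong_left) (auto simp: h_def)
  also have "\<dots> = (\<Sum>U\<in>Pow {0..<n}. h (card U))"
    using sum_Pow_by_card[of "{0..<n}" h] by simp
  also have "\<dots> \<le> (\<Sum>U\<in>Pow {0..<n}. p (card U) * (scaled_purity n q (ket_bra psi) U - 1))"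
    unfolding h_def
    by (intro sum_mono k_uniform_scaled_purity_excess[OF psi assms(2) q _ assms(3)]) simp
  also have "\<dots> \<le> 0"
    by (rule k_uniform_weighted_scaled_purity_nonpos[OF psi kn q assms(4)])
  finally show False using assms(5) by linarith
qed

end
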